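(* Let $F:\mathcal C\to\mathcal D$ be a left multiadjoint and let $\mathcal M$ be a composable class of morphisms in $\mathcal D$. Suppose $\perp$ is an independence relation on $\mathcal D_{\mathcal M}$ that satisfies existence and that, regarded as an independence relation on $\mathcal D$, satisfies semi-invariance. Then $F^{-1}(\perp)$, as an independence relation on $\mathcal C_{F^{-1}(\mathcal M)}$, satisfies existence, where $F^{-1}(\mathcal M)$ is the class of morphisms $f$ of $\mathcal C$ with $F(f)\in\mathcal M$.
   Context: A class $\mathcal M$ of morphisms is composable if it is closed under composition and contains all isomorphisms; $\mathcal D_{\mathcal M}$ is the subcategory with all objects and morphisms in $\mathcal M$. A functor $F$ is a left multiadjoint if for every object $D$ of $\mathcal D$ there is a family $\{e_k:F(C_k)\to D\}_{k\in K}$ such that every $e:F(C)\to D$ factors as $e=e_kF(f)$ for a unique $k$ and unique $f:C\to C_k$. A commuting square consists of objects $C,A,B,M$ and morphisms $C\to A$, $C\to B$, $A\to M$, $B\to M$ with equal composites $C\to M$. An independence relation is a class of commuting squares (called independent); write $A\perp^M_C B$. $F^{-1}(\perp)$ consists of the commuting squares whose image under $F$ is in $\perp$. Existence: every span $A\leftarrow C\to B$ can be completed to an independent square. Semi-invariance: for a commuting square $C\to A$, $C\to B$, $A\to M$, $B\to M$ and any $M\to N$, if the square with $A\to M\to N$, $B\to M\to N$ is independent then the square with $A\to M$, $B\to M$ is independent. *)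

theory Defs
  imports Main
begin

text \<open>Categories with object type 'o and arrow type 'a.
  Comp g f denotes the composite g after f, defined when Cod f = Dom g.\<close>

record ('o, 'a) cat =
  Obj  :: "'o set"
  Arr  :: "'a set"
  Dom  :: "'a \<Rightarrow> 'o"
  Cod  :: "'a \<Rightarrow> 'o"
  Id   :: "'o \<Rightarrow> 'a"
  Comp :: "'a \<Rightarrow> 'a \<Rightarrow> 'a"

definition hom :: "('o, 'a) cat \<Rightarrow> 'o \<Rightarrow> 'o \<Rightarrow> 'a set" where
  "hom X x y = {f \<in> Arr X. Dom X f = x \<and> Cod X f = y}"

definition category :: "('o, 'a) cat \<Rightarrow> bool" where
  "category X \<longleftrightarrow>
     (\<forall>f \<in> Arr X. Dom X f \<in> Obj X \<and> Cod X f \<in> Obj X) \<and>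
     (\<forall>x \<in> Obj X. Id X x \<in> hom X x x) \<and>
     (\<forall>f \<in> Arr X. \<forall>g \<in> Arr X. Cod X f = Dom X g \<longrightarrow>
        Comp X g f \<in> hom X (Dom X f) (Cod X g)) \<and>
     (\<forall>f \<in> Arr X. \<forall>g \<in> Arr X. \<forall>h \<in> Arr X. Cod X f = Dom X g \<longrightarrow> Cod X g = Dom X h \<longrightarrow>
        Comp X h (Comp X g f) = Comp X (Comp X h g) f) \<and>
     (\<forall>f \<in> Arr X. Comp X f (Id X (Dom X f)) = f \<and> Comp X (Id X (Cod X f)) f = f)"

definition is_functor ::
  "('o1, 'a1) cat \<Rightarrow> ('o2, 'a2) cat \<Rightarrow> ('o1 \<Rightarrow> 'o2) \<Rightarrow> ('a1 \<Rightarrow> 'a2) \<Rightarrow> bool" where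
  "is_functor C D Fo Fa \<longleftrightarrow> category C \<and> category D \<and>
     (\<forall>x \<in> Obj C. Fo x \<in> Obj D \<and> Fa (Id C x) = Id D (Fo x)) \<and>
     (\<forall>f \<in> Arr C. Fa f \<in> hom D (Fo (Dom C f)) (Fo (Cod C f))) \<and>
     (\<forall>f \<in> Arr C. \<forall>g \<in> Arr C. Cod C f = Dom C g \<longrightarrow>
        Fa (Comp C g f) = Comp D (Fa g) (Fa f))"

text \<open>Left multiadjoint: for every object d of D there is a family of arrows
  e_k : F(C_k) \<rightarrow> d, encoded as a set K of pairs (C_k, e_k), such that every
  e : F(c) \<rightarrow> d factors as e = e_k \<circ> F(f) for a unique k and a unique f : c \<rightarrow> C_k.\<close>

definition left_multiadjoint ::
  "('o1, 'a1) cat \<Rightarrow> ('o2, 'a2) cat \<Rightarrow> ('o1 \<Rightarrow> 'o2) \<Rightarrow> ('a1 \<Rightarrow> 'a2) \<Rightarrow> bool" where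
  "left_multiadjoint C D Fo Fa \<longleftrightarrow> is_functor C D Fo Fa \<and>
     (\<forall>d \<in> Obj D. \<exists>K. (\<forall>k \<in> K. fst k \<in> Obj C \<and> snd k \<in> hom D (Fo (fst k)) d) \<and>
        (\<forall>c \<in> Obj C. \<forall>e \<in> hom D (Fo c) d.
           \<exists>!p. (case p of (k, f) \<Rightarrow>
             k \<in> K \<and> f \<in> hom C c (fst k) \<and> e = Comp D (snd k) (Fa f))))"

definition iso :: "('o, 'a) cat \<Rightarrow> 'a \<Rightarrow> bool" where
  "iso X f \<longleftrightarrow> f \<in> Arr X \<and> (\<exists>g \<in> hom X (Cod X f) (Dom X f).
      Comp X g f = Id X (Dom X f) \<and> Comp X f g = Id X (Cod X f))"

definition composable_class :: "('o, 'a) cat \<Rightarrow> 'a set \<Rightarrow> bool" where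
  "composable_class X M \<longleftrightarrow> M \<subseteq> Arr X \<and>
     (\<forall>f \<in> M. \<forall>g \<in> M. Cod X f = Dom X g \<longrightarrow> Comp X g f \<in> M) \<and>
     (\<forall>f. iso X f \<longrightarrow> f \<in> M)"

definition subcat :: "('o, 'a) cat \<Rightarrow> 'a set \<Rightarrow> ('o, 'a) cat" where
  "subcat X M = X\<lparr>Arr := M\<rparr>"

text \<open>A square is (C \<rightarrow> A, C \<rightarrow> B, A \<rightarrow> M, B \<rightarrow> M), i.e. (f1, f2, g1, g2).\<close>
type_synonym 'a square = "'a \<times> 'a \<times> 'a \<times> 'a"

definition comm_square :: "('o, 'a) cat \<Rightarrow> 'a square \<Rightarrow> bool" where
  "comm_square X s = (case s of (f1, f2, g1, g2) \<Rightarrow>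
     f1 \<in> Arr X \<and> f2 \<in> Arr X \<and> g1 \<in> Arr X \<and> g2 \<in> Arr X \<and>
     Dom X f1 = Dom X f2 \<and> Cod X f1 = Dom X g1 \<and> Cod X f2 = Dom X g2 \<and>
     Cod X g1 = Cod X g2 \<and> Comp X g1 f1 = Comp X g2 f2)"

definition independence_relation :: "('o, 'a) cat \<Rightarrow> 'a square set \<Rightarrow> bool" where
  "independence_relation X R \<longleftrightarrow> (\<forall>s \<in> R. comm_square X s)"

definition existence :: "('o, 'a) cat \<Rightarrow> 'a square set \<Rightarrow> bool" where
  "existence X R \<longleftrightarrow> (\<forall>f1 \<in> Arr X. \<forall>f2 \<in> Arr X. Dom X f1 = Dom X f2 \<longrightarrow>
     (\<exists>g1 g2. comm_square X (f1, f2, g1, g2) \<and> (f1, f2, g1, g2) \<in> R))"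

definition semi_invariance :: "('o, 'a) cat \<Rightarrow> 'a square set \<Rightarrow> bool" where
  "semi_invariance X R \<longleftrightarrow> (\<forall>f1 f2 g1 g2 h. comm_square X (f1, f2, g1, g2) \<longrightarrow>
     h \<in> Arr X \<longrightarrow> Dom X h = Cod X g1 \<longrightarrow>
     (f1, f2, Comp X h g1, Comp X h g2) \<in> R \<longrightarrow> (f1, f2, g1, g2) \<in> R)"

definition preimage_class :: "('o, 'a) cat \<Rightarrow> ('a \<Rightarrow> 'b) \<Rightarrow> 'b set \<Rightarrow> 'a set" where
  "preimage_class C Fa M = {f \<in> Arr C. Fa f \<in> M}"

definition preimage_rel ::
  "('o, 'a) cat \<Rightarrow> ('a \<Rightarrow> 'b) \<Rightarrow> 'b square set \<Rightarrow> 'a square set" where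
  "preimage_rel C Fa R = {(f1, f2, g1, g2). comm_square C (f1, f2, g1, g2) \<and>
      (Fa f1, Fa f2, Fa g1, Fa g2) \<in> R}"

end

theory Submission
  imports Defs
begin

text \<open>Complete the image under F of a span f1, f2 to an independent square g1, g2 with apex m,
  and factor g1 and g2 through the universal family of m. Both composites with f1, f2 are
  factorisations of the same arrow F(c) \<rightarrow> m, so by uniqueness they go through one and the same
  e_k : F(C_k) \<rightarrow> m and yield a commuting square (f1, f2, h1, h2) in C with g_i = e_k \<circ> F(h_i).
  Semi-invariance, applied to the arrow e_k, makes the image of that square independent.\<close>

lemma category_Obj_of_hom:
  assumes "category X" "f \<in> hom X x y"
  shows "x \<in> Obj X" "y \<in> Obj X"
  using assms unfolding category_def hom_def by auto

lemma category_Comp_in_hom: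
  assumes "category X" "f \<in> hom X x y" "g \<in> hom X y z"
  shows "Comp X g f \<in> hom X x z"
  using assms unfolding category_def hom_def by auto

lemma category_Comp_assoc:
  assumes "category X" "f \<in> hom X w x" "g \<in> hom X x y" "h \<in> hom X y z"
  shows "Comp X h (Comp X g f) = Comp X (Comp X h g) f"
  using assms unfolding category_def hom_def by auto

lemma functor_in_hom:
  assumes "is_functor C D Fo Fa" "f \<in> hom C x y"
  shows "Fa f \<in> hom D (Fo x) (Fo y)"
  using assms unfolding is_functor_def hom_def by auto

lemma functor_Comp:
  assumes "is_functor C D Fo Fa" "f \<in> hom C x y" "g \<in> hom C y z"
  shows "Fa (Comp C g f) = Comp D (Fa g) (Fa f)"
  using assms unfolding is_functor_def hom_def by auto

lemma comm_square_iff_hom: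
  "comm_square X (f1, f2, g1, g2) \<longleftrightarrow>
     (\<exists>c a b m. f1 \<in> hom X c a \<and> f2 \<in> hom X c b \<and> g1 \<in> hom X a m \<and> g2 \<in> hom X b m) \<and>
     Comp X g1 f1 = Comp X g2 f2"
  unfolding comm_square_def hom_def by auto

lemma functor_comm_square:
  assumes "is_functor C D Fo Fa" "comm_square C (f1, f2, g1, g2)"
  shows "comm_square D (Fa f1, Fa f2, Fa g1, Fa g2)"
proof -
  from assms(2) obtain c a b m where
    hom: "f1 \<in> hom C c a" "f2 \<in> hom C c b" "g1 \<in> hom C a m" "g2 \<in> hom C b m"
    and comm: "Comp C g1 f1 = Comp C g2 f2"
    unfolding comm_square_iff_hom by blast
  have "Comp D (Fa g1) (Fa f1) = Comp D (Fa g2) (Fa f2)"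
    using comm functor_Comp[OF assms(1)] hom by metis
  then show ?thesis
    unfolding comm_square_iff_hom using functor_in_hom[OF assms(1)] hom by blast
qed

lemma subcat_simps [simp]:
  "Obj (subcat X M) = Obj X" "Arr (subcat X M) = M" "Dom (subcat X M) = Dom X"
  "Cod (subcat X M) = Cod X" "Id (subcat X M) = Id X" "Comp (subcat X M) = Comp X"
  by (simp_all add: subcat_def)

lemma comm_square_subcat_iff:
  "comm_square (subcat X M) (f1, f2, g1, g2) \<longleftrightarrow>
     comm_square X (f1, f2, g1, g2) \<and> f1 \<in> M \<and> f2 \<in> M \<and> g1 \<in> M \<and> g2 \<in> M"
  if "M \<subseteq> Arr X"
  using that unfolding comm_square_def by auto

lemma independent_square_in_class:
  assumes "independence_relation (subcat X M) R" "(f1, f2, g1, g2) \<in> R"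
  shows "f1 \<in> M" "f2 \<in> M" "g1 \<in> M" "g2 \<in> M"
  using assms unfolding independence_relation_def comm_square_def by auto

lemma independence_relation_preimage_rel:
  assumes "independence_relation (subcat D M) R"
  shows "independence_relation (subcat C (preimage_class C Fa M)) (preimage_rel C Fa R)"
  unfolding independence_relation_def preimage_rel_def
proof (clarify)
  fix f1 f2 g1 g2
  assume "comm_square C (f1, f2, g1, g2)" and "(Fa f1, Fa f2, Fa g1, Fa g2) \<in> R"
  with independent_square_in_class[OF assms] show
    "comm_square (subcat C (preimage_class C Fa M)) (f1, f2, g1, g2)"
    by (simp add: preimage_class_def comm_square_def)
qed

definition universal_family ::
  "('o1, 'a1) cat \<Rightarrow> ('o2, 'a2) cat \<Rightarrow> ('o1 \<Rightarrow> 'o2) \<Rightarrow> ('a1 \<Rightarrow> 'a2) \<Rightarrow> 'o2 \<Rightarrow> ('o1 \<times> 'a2) set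
     \<Rightarrow> bool" where
  "universal_family C D Fo Fa d K \<longleftrightarrow>
     (\<forall>k \<in> K. fst k \<in> Obj C \<and> snd k \<in> hom D (Fo (fst k)) d) \<and>
     (\<forall>c \<in> Obj C. \<forall>e \<in> hom D (Fo c) d.
        \<exists>!p. (case p of (k, f) \<Rightarrow> k \<in> K \<and> f \<in> hom C c (fst k) \<and> e = Comp D (snd k) (Fa f)))"

lemma left_multiadjoint_universal_family:
  assumes "left_multiadjoint C D Fo Fa" "d \<in> Obj D"
  obtains K where "universal_family C D Fo Fa d K"
  using assms unfolding left_multiadjoint_def universal_family_def by blast

lemma universal_family_in_hom:
  assumes "universal_family C D Fo Fa d K" "k \<in> K"
  shows "snd k \<in> hom D (Fo (fst k)) d"
  using assms unfolding universal_family_def by blast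

lemma universal_family_factor:
  assumes "universal_family C D Fo Fa d K" "c \<in> Obj C" "e \<in> hom D (Fo c) d"
  obtains k f where "k \<in> K" "f \<in> hom C c (fst k)" "e = Comp D (snd k) (Fa f)"
proof -
  from assms obtain p where
    "case p of (k, f) \<Rightarrow> k \<in> K \<and> f \<in> hom C c (fst k) \<and> e = Comp D (snd k) (Fa f)"
    unfolding universal_family_def by blast
  then show ?thesis
    using that by (cases p) auto
qed

lemma universal_family_factor_unique:
  assumes "universal_family C D Fo Fa d K" "c \<in> Obj C" "e \<in> hom D (Fo c) d"
    and "k \<in> K" "f \<in> hom C c (fst k)" "e = Comp D (snd k) (Fa f)"
    and "k' \<in> K" "f' \<in> hom C c (fst k')" "e = Comp D (snd k') (Fa f')"
  shows "k = k'" "f = f'"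
proof -
  have "\<exists>!p. (case p of (k, f) \<Rightarrow> k \<in> K \<and> f \<in> hom C c (fst k) \<and> e = Comp D (snd k) (Fa f))"
    using assms(1-3) unfolding universal_family_def by blast
  then have "(k, f) = (k', f')"
    using assms(4-9) by (metis (mono_tags, lifting) case_prod_conv)
  then show "k = k'" "f = f'" by simp_all
qed

lemma left_multiadjoint_lift_comm_square:
  assumes multiadj: "left_multiadjoint C D Fo Fa"
    and f1: "f1 \<in> hom C c a" and f2: "f2 \<in> hom C c b"
    and g1: "g1 \<in> hom D (Fo a) m" and g2: "g2 \<in> hom D (Fo b) m"
    and comm: "Comp D g1 (Fa f1) = Comp D g2 (Fa f2)"
  obtains x e h1 h2 where "e \<in> hom D (Fo x) m" "h1 \<in> hom C a x" "h2 \<in> hom C b x"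
    "Comp C h1 f1 = Comp C h2 f2" "g1 = Comp D e (Fa h1)" "g2 = Comp D e (Fa h2)"
proof -
  have F: "is_functor C D Fo Fa"
    using multiadj unfolding left_multiadjoint_def by blast
  then have C: "category C" and D: "category D"
    unfolding is_functor_def by auto
  obtain K where K: "universal_family C D Fo Fa m K"
    using left_multiadjoint_universal_family[OF multiadj category_Obj_of_hom(2)[OF D g1]] .
  obtain k1 h1 where k1: "k1 \<in> K" and h1: "h1 \<in> hom C a (fst k1)"
    and g1_eq: "g1 = Comp D (snd k1) (Fa h1)"
    using universal_family_factor[OF K category_Obj_of_hom(2)[OF C f1] g1] .
  obtain k2 h2 where k2: "k2 \<in> K" and h2: "h2 \<in> hom C b (fst k2)"
    and g2_eq: "g2 = Comp D (snd k2) (Fa h2)"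
    using universal_family_factor[OF K category_Obj_of_hom(2)[OF C f2] g2] .
  have lift1: "Comp D g1 (Fa f1) = Comp D (snd k1) (Fa (Comp C h1 f1))"
    using category_Comp_assoc[OF D functor_in_hom[OF F f1] functor_in_hom[OF F h1]
        universal_family_in_hom[OF K k1]]
    by (simp add: g1_eq functor_Comp[OF F f1 h1])
  have lift2: "Comp D g1 (Fa f1) = Comp D (snd k2) (Fa (Comp C h2 f2))"
    using category_Comp_assoc[OF D functor_in_hom[OF F f2] functor_in_hom[OF F h2]
        universal_family_in_hom[OF K k2]]
    by (simp add: comm g2_eq functor_Comp[OF F f2 h2])
  have "Comp D g1 (Fa f1) \<in> hom D (Fo c) m"
    using category_Comp_in_hom[OF D functor_in_hom[OF F f1] g1] .
  note unique = universal_family_factor_unique[OF K category_Obj_of_hom(1)[OF C f1] this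
      k1 category_Comp_in_hom[OF C f1 h1] lift1 k2 category_Comp_in_hom[OF C f2 h2] lift2]
  show ?thesis
  proof (rule that)
    show "snd k1 \<in> hom D (Fo (fst k1)) m" using universal_family_in_hom[OF K k1] .
    show "h2 \<in> hom C b (fst k1)" using h2 unique(1) by simp
  qed (use h1 unique(2) g1_eq g2_eq unique(1) in simp_all)
qed

lemma existence_subcat_hom:
  assumes exist: "existence (subcat X M) R" and M: "M \<subseteq> Arr X"
    and f1: "f1 \<in> hom X c a" "f1 \<in> M" and f2: "f2 \<in> hom X c b" "f2 \<in> M"
  obtains m g1 g2 where "g1 \<in> hom X a m" "g2 \<in> hom X b m"
    "Comp X g1 f1 = Comp X g2 f2" "(f1, f2, g1, g2) \<in> R"
proof -
  from exist f1 f2 obtain g1 g2 where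
    "comm_square (subcat X M) (f1, f2, g1, g2)" and R: "(f1, f2, g1, g2) \<in> R"
    unfolding existence_def hom_def by fastforce
  then have "comm_square X (f1, f2, g1, g2)"
    using comm_square_subcat_iff[OF M] by blast
  with f1 f2 R show ?thesis
    using that unfolding comm_square_def hom_def by auto
qed

lemma existence_preimage_rel:
  assumes multiadj: "left_multiadjoint C D Fo Fa"
    and M: "M \<subseteq> Arr D"
    and indep: "independence_relation (subcat D M) R"
    and exist: "existence (subcat D M) R"
    and semi_inv: "semi_invariance D R"
  shows "existence (subcat C (preimage_class C Fa M)) (preimage_rel C Fa R)"
  unfolding existence_def
proof (intro ballI impI)
  let ?N = "preimage_class C Fa M"
  have F: "is_functor C D Fo Fa"
    using multiadj unfolding left_multiadjoint_def by blast
  fix f1 f2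
  assume "f1 \<in> Arr (subcat C ?N)" "f2 \<in> Arr (subcat C ?N)"
    and "Dom (subcat C ?N) f1 = Dom (subcat C ?N) f2"
  then obtain c a b where f1: "f1 \<in> hom C c a" "Fa f1 \<in> M" and f2: "f2 \<in> hom C c b" "Fa f2 \<in> M"
    unfolding preimage_class_def hom_def by auto
  obtain m g1 g2 where "g1 \<in> hom D (Fo a) m" "g2 \<in> hom D (Fo b) m"
    and "Comp D g1 (Fa f1) = Comp D g2 (Fa f2)" and R: "(Fa f1, Fa f2, g1, g2) \<in> R"
    using existence_subcat_hom[OF exist M functor_in_hom[OF F f1(1)] f1(2)
        functor_in_hom[OF F f2(1)] f2(2)] .
  then obtain x e h1 h2 where e: "e \<in> hom D (Fo x) m" and h: "h1 \<in> hom C a x" "h2 \<in> hom C b x"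
    and comm: "Comp C h1 f1 = Comp C h2 f2"
    and g_eq: "g1 = Comp D e (Fa h1)" "g2 = Comp D e (Fa h2)"
    using left_multiadjoint_lift_comm_square[OF multiadj f1(1) f2(1)] by metis
  have square: "comm_square C (f1, f2, h1, h2)"
    unfolding comm_square_iff_hom using f1 f2 h comm by blast
  have "(Fa f1, Fa f2, Fa h1, Fa h2) \<in> R"
  proof (rule semi_inv[unfolded semi_invariance_def, rule_format])
    show "comm_square D (Fa f1, Fa f2, Fa h1, Fa h2)"
      using functor_comm_square[OF F square] .
    show "e \<in> Arr D" "Dom D e = Cod D (Fa h1)"
      using e functor_in_hom[OF F h(1)] unfolding hom_def by auto
    show "(Fa f1, Fa f2, Comp D e (Fa h1), Comp D e (Fa h2)) \<in> R"
      using R g_eq by simp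
  qed
  with square have in_preimage: "(f1, f2, h1, h2) \<in> preimage_rel C Fa R"
    unfolding preimage_rel_def by simp
  moreover have "comm_square (subcat C ?N) (f1, f2, h1, h2)"
    using independence_relation_preimage_rel[OF indep] in_preimage
    unfolding independence_relation_def by blast
  ultimately show "\<exists>g1 g2. comm_square (subcat C ?N) (f1, f2, g1, g2) \<and>
      (f1, f2, g1, g2) \<in> preimage_rel C Fa R"
    by blast
qed

theorem theorem5p3:
  fixes C :: "('o1, 'a1) cat" and D :: "('o2, 'a2) cat"
    and Fo :: "'o1 \<Rightarrow> 'o2" and Fa :: "'a1 \<Rightarrow> 'a2"
    and M :: "'a2 set" and R :: "'a2 square set"
  assumes "left_multiadjoint C D Fo Fa"
    and "composable_class D M"
    and "independence_relation (subcat D M) R"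
    and "existence (subcat D M) R"
    and "semi_invariance D R"
  shows "independence_relation (subcat C (preimage_class C Fa M)) (preimage_rel C Fa R)
    \<and> existence (subcat C (preimage_class C Fa M)) (preimage_rel C Fa R)"
proof
  show "independence_relation (subcat C (preimage_class C Fa M)) (preimage_rel C Fa R)"
    using independence_relation_preimage_rel[OF assms(3)] .
  have "M \<subseteq> Arr D"
    using assms(2) unfolding composable_class_def by blast
  then show "existence (subcat C (preimage_class C Fa M)) (preimage_rel C Fa R)"
    using existence_preimage_rel[OF assms(1) _ assms(3-5)] by blast
qed

end
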